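(* Let $G$ be a finite connected graph with $\operatorname{diam}(G) = 2$. Then $\mathrm{gp_e}(G) = m(G)$, where $m(G)$ denotes the number of edges of $G$.
   Context: A geodesic in a graph is a shortest path between two vertices. A set $S$ of edges of a graph $G$ is an edge general position set if no geodesic of $G$ contains three edges of $S$. The edge general position number $\mathrm{gp_e}(G)$ is the maximum cardinality of an edge general position set of $G$. $\operatorname{diam}(G)$ is the maximum distance between two vertices of $G$. *)

theory Defs
  imports Main
begin

definition finite_simple_graph :: "'a set \<Rightarrow> 'a set set \<Rightarrow> bool" where
  "finite_simple_graph V E \<longleftrightarrow> finite V \<and>
     (\<forall>e\<in>E. \<exists>u v. e = {u, v} \<and> u \<in> V \<and> v \<in> V \<and> u \<noteq> v)"

definition is_walk :: "'a set \<Rightarrow> 'a set set \<Rightarrow> 'a list \<Rightarrow> bool" where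
  "is_walk V E xs \<longleftrightarrow> xs \<noteq> [] \<and> set xs \<subseteq> V \<and>
     (\<forall>i. Suc i < length xs \<longrightarrow> {xs ! i, xs ! Suc i} \<in> E)"

definition walk_edges :: "'a list \<Rightarrow> 'a set set" where
  "walk_edges xs = {{xs ! i, xs ! Suc i} | i. Suc i < length xs}"

definition connected_graph :: "'a set \<Rightarrow> 'a set set \<Rightarrow> bool" where
  "connected_graph V E \<longleftrightarrow>
     (\<forall>u\<in>V. \<forall>v\<in>V. \<exists>xs. is_walk V E xs \<and> hd xs = u \<and> last xs = v)"

definition gdist :: "'a set \<Rightarrow> 'a set set \<Rightarrow> 'a \<Rightarrow> 'a \<Rightarrow> nat" where
  "gdist V E u v = (LEAST n. \<exists>xs. is_walk V E xs \<and> hd xs = u \<and> last xs = v \<and> length xs = Suc n)"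

definition diam :: "'a set \<Rightarrow> 'a set set \<Rightarrow> nat" where
  "diam V E = Max {gdist V E u v | u v. u \<in> V \<and> v \<in> V}"

definition is_geodesic :: "'a set \<Rightarrow> 'a set set \<Rightarrow> 'a list \<Rightarrow> bool" where
  "is_geodesic V E xs \<longleftrightarrow> is_walk V E xs \<and> length xs = Suc (gdist V E (hd xs) (last xs))"

definition edge_gp_set :: "'a set \<Rightarrow> 'a set set \<Rightarrow> 'a set set \<Rightarrow> bool" where
  "edge_gp_set V E S \<longleftrightarrow> S \<subseteq> E \<and>
     (\<forall>xs. is_geodesic V E xs \<longrightarrow> card (walk_edges xs \<inter> S) < 3)"

definition gp_e :: "'a set \<Rightarrow> 'a set set \<Rightarrow> nat" where
  "gp_e V E = Max (card ` {S. edge_gp_set V E S})"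

end

theory Submission
  imports Defs
begin

text \<open>A geodesic is no longer than the diameter, so in a graph of diameter at most 2 every
  geodesic has at most two edges and cannot contain three edges of any set. Hence the whole edge
  set is an edge general position set, and trivially no such set is larger.\<close>

lemma walk_edges_eq_image: "walk_edges xs = (\<lambda>i. {xs ! i, xs ! Suc i}) ` {..<length xs - 1}"
  unfolding walk_edges_def by auto

lemma finite_walk_edges: "finite (walk_edges xs)"
  by (simp add: walk_edges_eq_image)

lemma card_walk_edges_le: "card (walk_edges xs) \<le> length xs - 1"
  unfolding walk_edges_eq_image by (rule card_image_le[THEN order_trans]) simp_all

lemma finite_simple_graph_finite_edges:
  assumes "finite_simple_graph V E"
  shows "finite E"
proof -
  have "E \<subseteq> Pow V" "finite V"
    using assms unfolding finite_simple_graph_def by auto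
  then show ?thesis by (meson finite_Pow_iff finite_subset)
qed

lemma gdist_le_diam:
  assumes "finite V" "u \<in> V" "v \<in> V"
  shows "gdist V E u v \<le> diam V E"
proof -
  have "{gdist V E u v | u v. u \<in> V \<and> v \<in> V} = (\<lambda>(u, v). gdist V E u v) ` (V \<times> V)"
    by auto
  then have "finite {gdist V E u v | u v. u \<in> V \<and> v \<in> V}"
    using assms(1) by simp
  then show ?thesis
    unfolding diam_def by (rule Max_ge) (use assms(2,3) in blast)
qed

lemma geodesic_length_le_diam:
  assumes "finite V" "is_geodesic V E xs"
  shows "length xs \<le> Suc (diam V E)"
proof -
  have "is_walk V E xs" and len: "length xs = Suc (gdist V E (hd xs) (last xs))"
    using assms(2) unfolding is_geodesic_def by auto
  then have "hd xs \<in> V" "last xs \<in> V"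
    unfolding is_walk_def by auto
  with assms(1) len show ?thesis
    using gdist_le_diam by fastforce
qed

lemma edge_gp_set_edges_if_diam_le_2:
  assumes "finite V" "diam V E \<le> 2"
  shows "edge_gp_set V E E"
  unfolding edge_gp_set_def
proof (intro conjI allI impI)
  fix xs
  assume "is_geodesic V E xs"
  then have "card (walk_edges xs) \<le> 2"
    using geodesic_length_le_diam[OF assms(1)] assms(2) card_walk_edges_le[of xs] by fastforce
  then show "card (walk_edges xs \<inter> E) < 3"
    using card_mono[OF finite_walk_edges[of xs], of "walk_edges xs \<inter> E"] by auto
qed simp

lemma gp_e_eq_card_edges:
  assumes "finite E" "edge_gp_set V E E"
  shows "gp_e V E = card E"
  unfolding gp_e_def
proof (rule Max_eqI)
  have "{S. edge_gp_set V E S} \<subseteq> Pow E"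
    unfolding edge_gp_set_def by auto
  then show "finite (card ` {S. edge_gp_set V E S})"
    using assms(1) finite_subset by blast
next
  fix k
  assume "k \<in> card ` {S. edge_gp_set V E S}"
  then show "k \<le> card E"
    using assms(1) card_mono unfolding edge_gp_set_def by blast
next
  show "card E \<in> card ` {S. edge_gp_set V E S}"
    using assms(2) by blast
qed

theorem lemma2p1:
  fixes V :: "'a set" and E :: "'a set set"
  assumes "finite_simple_graph V E"
    and "connected_graph V E"
    and "diam V E = 2"
  shows "gp_e V E = card E"
proof (rule gp_e_eq_card_edges)
  show "finite E"
    using assms(1) by (rule finite_simple_graph_finite_edges)
  have "finite V"
    using assms(1) unfolding finite_simple_graph_def by blast
  then show "edge_gp_set V E E"
    using assms(3) by (simp add: edge_gp_set_edges_if_diam_le_2)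
qed

end
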